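(* For $i=1,\dots,K$ let $f_i:\mathbb{R}^{n_i}\to\mathbb{R}$ be convex with convex feasible set $\mathcal{X}_i$ and optimal value $f_i^*=\min_{x\in\mathcal{X}_i}f_i(x)$, and let $\mathcal{A}_i$ be a $g_i(k)$-bounded algorithm for $\min_{x\in\mathcal{X}_i}f_i(x)$. Run the F-LCB algorithm with these base algorithms (deterministic oracles). Then for every $\tau\in\{1,\dots,T\}$, $$R_O(\tau)\le\sum_{t=1}^{\tau}g_{i_t}(k_{i_t,t})=\sum_{i=1}^K\sum_{k=1}^{k_{i,\tau}}g_i(k),$$ where $k_{i,t}$ is the number of calls (updates) of the $i$-th function by time $t$.
   Context: An algorithm $x_{k+1}=\mathcal{A}(x_0,\mathcal{O}(x_0),\dots,x_k,\mathcal{O}(x_k))$ for $\min_{x\in\mathcal{X}}f(x)$ is $g(k)$-bounded if $f(x_k)-f(x^* )\le g(k)$ for every $k\in\mathbb{N}$, where $x^*$ is a minimizer. F-LCB algorithm: start from initial points $x_0^{i}$; run one step of each $\mathcal{A}_i$ to get $x_1^i$, set $k_i=1$ and $LCB_i=f_i(x_{1}^{i})-g_i(1)$. For $t=1,\dots,T$: choose $i_t=\arg\min_{1\le i\le K}LCB_i$; run one more step of $\mathcal{A}_{i_t}$ to obtain $x^{i_t}_{k_{i_t}+1}$; set $LCB_{i_t}=f_{i_t}(x^{i_t}_{k_{i_t}+1})-g_{i_t}(k_{i_t}+1)$ (other indices unchanged); increase $k_{i_t}$ by one. Denote by $x^{i,k}$ the $k$-th iterate of arm $i$. The loss at round $t$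 is $f_{i_t}(x^{i_t,k_{i_t,t}})$, the value of the chosen arm at the iterate used for its current LCB, and the regret is $R_O(\tau)=\sum_{t=1}^{\tau}\big[f_{i_t}(x^{i_t,k_{i_t,t}})-f^*\big]$ with $f^*=\min_i f_i^*$. *)

theory Defs
  imports "HOL-Analysis.Analysis"
begin

text \<open>Euclidean space R^n, represented as real sequences vanishing from index n on
  (so that arms of different dimensions n_i share one carrier type).\<close>
definition Rn :: "nat \<Rightarrow> (nat \<Rightarrow> real) set" where
  "Rn n = {x. \<forall>j\<ge>n. x j = 0}"

definition cvx_comb :: "real \<Rightarrow> (nat \<Rightarrow> real) \<Rightarrow> (nat \<Rightarrow> real) \<Rightarrow> (nat \<Rightarrow> real)" where
  "cvx_comb u x y = (\<lambda>j. u * x j + (1 - u) * y j)"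

definition cvx_set :: "(nat \<Rightarrow> real) set \<Rightarrow> bool" where
  "cvx_set S \<longleftrightarrow> (\<forall>x\<in>S. \<forall>y\<in>S. \<forall>u::real. 0 \<le> u \<and> u \<le> 1 \<longrightarrow> cvx_comb u x y \<in> S)"

definition cvx_fun :: "(nat \<Rightarrow> real) set \<Rightarrow> ((nat \<Rightarrow> real) \<Rightarrow> real) \<Rightarrow> bool" where
  "cvx_fun S f \<longleftrightarrow> (\<forall>x\<in>S. \<forall>y\<in>S. \<forall>u::real. 0 \<le> u \<and> u \<le> 1 \<longrightarrow>
      f (cvx_comb u x y) \<le> u * f x + (1 - u) * f y)"

text \<open>Deterministic first-order algorithm: the next point is a function of the history
  of queried points and oracle answers. hist A Orc x0 k = [(x_0,Orc x_0),...,(x_k,Orc x_k)].\<close>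
primrec hist :: "(('x \<times> 'o) list \<Rightarrow> 'x) \<Rightarrow> ('x \<Rightarrow> 'o) \<Rightarrow> 'x \<Rightarrow> nat \<Rightarrow> ('x \<times> 'o) list" where
  "hist A Orc x0 0 = [(x0, Orc x0)]"
| "hist A Orc x0 (Suc k) = (let x = A (hist A Orc x0 k) in hist A Orc x0 k @ [(x, Orc x)])"

definition iterate :: "(('x \<times> 'o) list \<Rightarrow> 'x) \<Rightarrow> ('x \<Rightarrow> 'o) \<Rightarrow> 'x \<Rightarrow> nat \<Rightarrow> 'x" where
  "iterate A Orc x0 k = fst (last (hist A Orc x0 k))"

definition g_bounded :: "(('x \<times> 'o) list \<Rightarrow> 'x) \<Rightarrow> ('x \<Rightarrow> 'o) \<Rightarrow> 'x \<Rightarrow> ('x \<Rightarrow> real) \<Rightarrow> 'x \<Rightarrow> (nat \<Rightarrow> real) \<Rightarrow> bool" where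
  "g_bounded A Orc x0 f xs g \<longleftrightarrow> (\<forall>k. f (iterate A Orc x0 k) - f xs \<le> g k)"

text \<open>F-LCB bookkeeping. sel t (t = 1,2,...) is the arm chosen in round t.
  cnt sel t i = k_i at the start of round t (1 after the initial step, +1 per selection).\<close>
definition cnt :: "(nat \<Rightarrow> nat) \<Rightarrow> nat \<Rightarrow> nat \<Rightarrow> nat" where
  "cnt sel t i = 1 + card {s. 1 \<le> s \<and> s < t \<and> sel s = i}"

definition upd :: "(nat \<Rightarrow> nat) \<Rightarrow> nat \<Rightarrow> nat \<Rightarrow> nat" where
  "upd sel t i = card {s. 1 \<le> s \<and> s \<le> t \<and> sel s = i}"

end

theory Submission
  imports Defs
begin

text \<open>In round t the chosen arm has the smallest lower confidence bound f_i(x) - g_i(k).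
  Since every algorithm is g-bounded, each lower confidence bound of the arm j attaining
  f* = min_i f_i* lies below f*, so the loss of round t exceeds f* by at most the width
  g_{i_t}(k_{i_t,t}) of its own bound. Summing over rounds and regrouping by arm, the
  arm i contributes exactly the widths g_i(1), ..., g_i(k_{i,\<tau>}), one per update.\<close>

lemma g_bounded_lcb_le:
  assumes "g_bounded A Orc x0 f xs g"
  shows "f (iterate A Orc x0 k) - g k \<le> f xs"
  using assms[unfolded g_bounded_def, rule_format, of k] by linarith

lemma cnt_Suc: "cnt sel (Suc m) i = Suc (upd sel m i)"
  unfolding cnt_def upd_def by (simp add: less_Suc_eq_le)

lemma upd_Suc: "upd sel (Suc m) i = upd sel m i + (if sel (Suc m) = i then 1 else 0)"
proof -
  have "{s. 1 \<le> s \<and> s \<le> Suc m \<and> sel s = i} =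
      {s. 1 \<le> s \<and> s \<le> m \<and> sel s = i} \<union> (if sel (Suc m) = i then {Suc m} else {})"
    by (auto simp: le_Suc_eq)
  moreover have "finite {s. 1 \<le> s \<and> s \<le> m \<and> sel s = i}"
    by (rule finite_subset[of _ "{..m}"]) auto
  ultimately show ?thesis
    unfolding upd_def by (simp add: card_Un_disjoint disjoint_iff)
qed

lemma sum_rounds_by_arm:
  fixes g :: "nat \<Rightarrow> nat \<Rightarrow> 'a::comm_monoid_add"
  assumes "\<And>t. 1 \<le> t \<Longrightarrow> t \<le> m \<Longrightarrow> sel t < K"
  shows "(\<Sum>t=1..m. g (sel t) (cnt sel t (sel t))) = (\<Sum>i<K. \<Sum>k=1..upd sel m i. g i k)"
  using assms
proof (induction m)
  case 0
  then show ?case by (simp add: upd_def)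
next
  case (Suc m)
  have "(\<Sum>i<K. \<Sum>k=1..upd sel (Suc m) i. g i k)
      = (\<Sum>i<K. (\<Sum>k=1..upd sel m i. g i k) + (if sel (Suc m) = i then g i (Suc (upd sel m i)) else 0))"
    by (rule sum.cong) (auto simp: upd_Suc)
  also have "\<dots> = (\<Sum>i<K. \<Sum>k=1..upd sel m i. g i k) + g (sel (Suc m)) (cnt sel (Suc m) (sel (Suc m)))"
    using Suc.prems by (simp add: sum.distrib cnt_Suc)
  finally show ?case
    using Suc by (simp add: add.commute)
qed

theorem lemma1:
  fixes K T :: nat
    and n :: "nat \<Rightarrow> nat"
    and f :: "nat \<Rightarrow> (nat \<Rightarrow> real) \<Rightarrow> real"
    and X :: "nat \<Rightarrow> (nat \<Rightarrow> real) set"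
    and xs :: "nat \<Rightarrow> (nat \<Rightarrow> real)"
    and A :: "nat \<Rightarrow> ((nat \<Rightarrow> real) \<times> 'o) list \<Rightarrow> (nat \<Rightarrow> real)"
    and Orc :: "nat \<Rightarrow> (nat \<Rightarrow> real) \<Rightarrow> 'o"
    and x0 :: "nat \<Rightarrow> (nat \<Rightarrow> real)"
    and g :: "nat \<Rightarrow> nat \<Rightarrow> real"
    and sel :: "nat \<Rightarrow> nat"
    and \<tau> :: nat
  assumes K_pos: "K \<ge> 1"
    and f_cvx: "\<And>i. i < K \<Longrightarrow> cvx_fun (Rn (n i)) (f i)"
    and X_sub: "\<And>i. i < K \<Longrightarrow> X i \<subseteq> Rn (n i)"
    and X_cvx: "\<And>i. i < K \<Longrightarrow> cvx_set (X i)"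
    and xs_min: "\<And>i. i < K \<Longrightarrow> xs i \<in> X i \<and> (\<forall>x\<in>X i. f i (xs i) \<le> f i x)"
    and bounded: "\<And>i. i < K \<Longrightarrow> g_bounded (A i) (Orc i) (x0 i) (f i) (xs i) (g i)"
    and sel_arm: "\<And>t. 1 \<le> t \<Longrightarrow> t \<le> T \<Longrightarrow> sel t < K"
    and sel_lcb: "\<And>t j. 1 \<le> t \<Longrightarrow> t \<le> T \<Longrightarrow> j < K \<Longrightarrow>
        f (sel t) (iterate (A (sel t)) (Orc (sel t)) (x0 (sel t)) (cnt sel t (sel t))) - g (sel t) (cnt sel t (sel t))
        \<le> f j (iterate (A j) (Orc j) (x0 j) (cnt sel t j)) - g j (cnt sel t j)"
    and tau: "1 \<le> \<tau>" "\<tau> \<le> T"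
  shows "(\<Sum>t=1..\<tau>. f (sel t) (iterate (A (sel t)) (Orc (sel t)) (x0 (sel t)) (cnt sel t (sel t)))
            - Min ((\<lambda>i. f i (xs i)) ` {..<K}))
         \<le> (\<Sum>t=1..\<tau>. g (sel t) (cnt sel t (sel t)))
       \<and> (\<Sum>t=1..\<tau>. g (sel t) (cnt sel t (sel t))) = (\<Sum>i<K. \<Sum>k=1..upd sel \<tau> i. g i k)"
proof
  have "Min ((\<lambda>i. f i (xs i)) ` {..<K}) \<in> (\<lambda>i. f i (xs i)) ` {..<K}"
    using K_pos by (intro Min_in) (auto simp: lessThan_empty_iff)
  then obtain j where j: "j < K" "Min ((\<lambda>i. f i (xs i)) ` {..<K}) = f j (xs j)"
    by auto
  have "f (sel t) (iterate (A (sel t)) (Orc (sel t)) (x0 (sel t)) (cnt sel t (sel t)))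
      - f j (xs j) \<le> g (sel t) (cnt sel t (sel t))" if "t \<in> {1..\<tau>}" for t
    using sel_lcb[of t j] g_bounded_lcb_le[OF bounded[OF j(1)], of "cnt sel t j"] that tau j(1)
    by fastforce
  then show "(\<Sum>t=1..\<tau>. f (sel t) (iterate (A (sel t)) (Orc (sel t)) (x0 (sel t)) (cnt sel t (sel t)))
      - Min ((\<lambda>i. f i (xs i)) ` {..<K})) \<le> (\<Sum>t=1..\<tau>. g (sel t) (cnt sel t (sel t)))"
    unfolding j(2) by (rule sum_mono)
  show "(\<Sum>t=1..\<tau>. g (sel t) (cnt sel t (sel t))) = (\<Sum>i<K. \<Sum>k=1..upd sel \<tau> i. g i k)"
    using sel_arm tau by (intro sum_rounds_by_arm) auto
qed

end
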